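(* Let $(\mathsf K,\mathsf D)$ be a differential ring with a ring automorphism $a\mapsto a\circ\lambda$ and a central unit $\lambda'$ with all $\mathsf D^j(\lambda')$ central, satisfying $\mathsf D(a\circ\lambda)=\lambda'(\mathsf Da)\circ\lambda$; write $\lambda''=\mathsf D(\lambda')$, $\lambda'''=\mathsf D^2(\lambda')$, $\sigma=(\lambda')^{-1}$, and $$S(\lambda)=\frac{\lambda'''}{\lambda'}-\frac32\Bigl(\frac{\lambda''}{\lambda'}\Bigr)^2,\quad S'(\lambda)=\mathsf D(S(\lambda)),\quad S''(\lambda)=\mathsf D^2(S(\lambda)).$$ Let $L=\sum_{i=0}^n\binom ni a_i\mathsf D^{n-i}$ ($a_0=1$), and let $\widehat L^\lambda:=\sigma^{-n}\sum_{i=0}^n\binom ni(a_i\circ\lambda)(\sigma\mathsf D)^{n-i}$, a monic operator with gauge–Wilczynski covariants $I_k^\lambda$. Then, for $n\ge2$, $$I_2^\lambda=(\lambda')^2(I_2\circ\lambda)+\frac{n+1}{6}S(\lambda);$$ for $n\ge3$, $$I_3^\lambda=(\lambda')^3(I_3\circ\lambda)+3\lambda'\lambda''(I_2\circ\lambda)+\frac{n+1}{4}S'(\lambda);$$ and for $n\ge4$, $$I_4^\lambda=(\lambda')^4(I_4\circ\lambda)+6(\lambda')^2\lambda''(I_3\circ\lambda)+\Bigl((n+5)\lambda'\lambda'''-\frac32(n-1)(\lambda'')^2\Bigr)(I_2\circ\lambda)+\frac{3(n+1)}{10}S''(\lambda)+\frac{(n+1)(5n+7)}{60}S(\lambda)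^2.$$
   Context: $\mathsf K$ is a unital associative (possibly noncommutative) ring with derivation $\mathsf D$; $\mathsf K\langle\mathsf D\rangle$ is the Ore algebra with coefficients on the left and $\mathsf D a=a\mathsf D+\mathsf D(a)$. For a monic operator $M=\sum_k\binom nk b_k\mathsf D^{n-k}$ ($b_0=1$), $I_k(M)$ are the unique elements with $M=(\mathsf D+b_1)^n+\sum_{k=2}^n\binom nk I_k(M)(\mathsf D+b_1)^{n-k}$; $I_k$ without superscript means $I_k(L)$. *)

theory Defs
  imports Main
begin

text \<open>Differential operators over a (possibly noncommutative) ring: an element
  of K<D> is represented by its left coefficient function c, meaning
  the sum over m of (c m) D^m (finite support).\<close>

definition rinv :: "'a::ring_1 \<Rightarrow> 'a" where
  "rinv x = (THE y. x * y = 1 \<and> y * x = 1)"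

definition is_derivation :: "('a::ring_1 \<Rightarrow> 'a) \<Rightarrow> bool" where
  "is_derivation Dr \<longleftrightarrow> (\<forall>x y. Dr (x + y) = Dr x + Dr y) \<and>
                          (\<forall>x y. Dr (x * y) = Dr x * y + x * Dr y)"

definition is_ring_automorphism :: "('a::ring_1 \<Rightarrow> 'a) \<Rightarrow> bool" where
  "is_ring_automorphism f \<longleftrightarrow> bij f \<and> (\<forall>x y. f (x + y) = f x + f y) \<and>
                          (\<forall>x y. f (x * y) = f x * f y) \<and> f 1 = 1"

definition central :: "'a::ring_1 \<Rightarrow> bool" where
  "central c \<longleftrightarrow> (\<forall>x. c * x = x * c)"

definition is_unit_ring :: "'a::ring_1 \<Rightarrow> bool" where
  "is_unit_ring c \<longleftrightarrow> (\<exists>y. c * y = 1 \<and> y * c = 1)"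

definition op_one :: "nat \<Rightarrow> 'a::ring_1" where
  "op_one m = (if m = 0 then 1 else 0)"

text \<open>Left multiplication by the first order operator c D + b:
  (c D + b) (sum q_j D^j), using D q = q D + D(q).\<close>
definition op_mul1 :: "('a::ring_1 \<Rightarrow> 'a) \<Rightarrow> 'a \<Rightarrow> 'a \<Rightarrow> (nat \<Rightarrow> 'a) \<Rightarrow> (nat \<Rightarrow> 'a)" where
  "op_mul1 Dr c b Q m = c * ((if m = 0 then 0 else Q (m - 1)) + Dr (Q m)) + b * Q m"

definition op_pow1 :: "('a::ring_1 \<Rightarrow> 'a) \<Rightarrow> 'a \<Rightarrow> 'a \<Rightarrow> nat \<Rightarrow> (nat \<Rightarrow> 'a)" where
  "op_pow1 Dr c b k = (op_mul1 Dr c b ^^ k) op_one"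

text \<open>L = sum_i (n choose i) a_i D^(n-i).\<close>
definition op_L :: "nat \<Rightarrow> (nat \<Rightarrow> 'a::ring_1) \<Rightarrow> (nat \<Rightarrow> 'a)" where
  "op_L n a m = (if m \<le> n then of_nat (n choose (n - m)) * a (n - m) else 0)"

text \<open>Gauge-Wilczynski covariants I_k(M) of a monic operator M of order n:
  the unique I_2,...,I_n with
  M = (D+b_1)^n + sum_{k=2}^n (n choose k) I_k (D+b_1)^(n-k),
  where the coefficient of D^(n-1) in M is n b_1.
  (I k is normalised to 0 outside 2..n.)\<close>
definition wilczynski :: "('a::ring_1 \<Rightarrow> 'a) \<Rightarrow> nat \<Rightarrow> (nat \<Rightarrow> 'a) \<Rightarrow> nat \<Rightarrow> 'a" where
  "wilczynski Dr n M =
     (let b1 = rinv (of_nat n) * M (n - 1) in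
      THE I. (\<forall>k. k \<notin> {2..n} \<longrightarrow> I k = 0) \<and>
        (\<forall>m. M m = op_pow1 Dr 1 b1 n m +
               (\<Sum>k=2..n. of_nat (n choose k) * I k * op_pow1 Dr 1 b1 (n - k) m)))"

text \<open>hat L^lambda = sigma^(-n) sum_i (n choose i) (a_i o lambda) (sigma D)^(n-i),
  with sigma = (lambda')^(-1), so sigma^(-n) = (lambda')^n (central).\<close>
definition op_Lhat :: "('a::ring_1 \<Rightarrow> 'a) \<Rightarrow> ('a \<Rightarrow> 'a) \<Rightarrow> 'a \<Rightarrow> nat \<Rightarrow> (nat \<Rightarrow> 'a) \<Rightarrow> (nat \<Rightarrow> 'a)" where
  "op_Lhat Dr lam lp n a m =
     (\<Sum>i=0..n. lp ^ n * of_nat (n choose i) * lam (a i) * op_pow1 Dr (rinv lp) 0 (n - i) m)"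

definition schwarzian :: "('a::ring_1 \<Rightarrow> 'a) \<Rightarrow> 'a \<Rightarrow> 'a" where
  "schwarzian Dr lp = Dr (Dr lp) * rinv lp
      - of_nat 3 * rinv (of_nat 2) * (Dr lp * rinv lp) ^ 2"

end

theory Submission
  imports Defs
begin

(*
  Write L = sum_j c_j (D + a_1)^j, so that c_n = 1, c_(n-1) = 0 and c_(n-k) = (n choose k) I_k.
  Applying lambda to the coefficients and replacing D by sigma D, sigma = 1/lambda', turns
  (D + a_1)^j into (sigma D + lambda(a_1))^j = (sigma (D + b) + g)^j, where b is the gauge of
  hat L^lambda and g = (n - 1)/2 * sigma * lambda''/lambda' is central.  The coefficients R_(j,i)
  of (sigma (D + b) + g)^j in powers of D + b are central, hence computable in the commutative
  centre of K; there the subdiagonals R_(j,j-k), k <= 4, are sigma^j times explicit polynomials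
  in j, lambda''/lambda' and the Schwarzian, found by induction on j.  Collecting the
  coefficient of (D + b)^(n-k) gives I_k^lambda = sum_t kappa_(k,t) (I_t o lambda), and the
  closed forms at j = n - t evaluate the kappa_(k,t).
*)

lemma central_mult_left: "central c \<Longrightarrow> c * x = x * c"
  by (simp add: central_def)

lemma central_0 [simp]: "central 0"
  and central_1 [simp]: "central 1"
  and central_of_nat [simp]: "central (of_nat k)"
  by (simp_all add: central_def mult_of_nat_commute)

lemma central_add [simp]: "central x \<Longrightarrow> central y \<Longrightarrow> central (x + y)"
  and central_diff [simp]: "central x \<Longrightarrow> central y \<Longrightarrow> central (x - y)"
  and central_uminus [simp]: "central x \<Longrightarrow> central (- x)"
  by (simp_all add: central_def algebra_simps)

lemma central_mult [simp]: "central x \<Longrightarrow> central y \<Longrightarrow> central (x * y)"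
  unfolding central_def by (metis mult.assoc)

lemma rinv_unit:
  assumes "is_unit_ring x"
  shows "x * rinv x = 1" and "rinv x * x = 1"
proof -
  obtain y where y: "x * y = 1" "y * x = 1"
    using assms unfolding is_unit_ring_def by blast
  have "rinv x = y"
    unfolding rinv_def
  proof (rule the_equality)
    fix z assume "x * z = 1 \<and> z * x = 1"
    then show "z = y"
      by (metis y(1) mult.assoc mult_1_left mult_1_right)
  qed (use y in simp)
  with y show "x * rinv x = 1" "rinv x * x = 1" by simp_all
qed

lemma unit_cancel_left:
  assumes "is_unit_ring u" and "u * x = u * y"
  shows "x = y"
  by (metis assms mult.assoc mult_1_left rinv_unit(2))

lemma central_rinv:
  assumes c: "central x" and u: "is_unit_ring x"
  shows "central (rinv x)"
  unfolding central_def
proof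
  fix z
  have "rinv x * z = rinv x * (z * x) * rinv x"
    using u by (simp add: mult.assoc rinv_unit(1))
  also have "\<dots> = rinv x * x * z * rinv x"
    using central_mult_left [OF c, of z] by (simp add: mult.assoc)
  also have "\<dots> = z * rinv x"
    using u by (simp add: rinv_unit(2))
  finally show "rinv x * z = z * rinv x" .
qed

lemma rinv_eqI:
  assumes "x * y = 1" and "y * x = 1"
  shows "rinv x = y"
  by (metis assms is_unit_ring_def mult.assoc mult_1_left rinv_unit(1))

lemma additive_0:
  fixes f :: "'a::group_add \<Rightarrow> 'b::group_add"
  assumes "\<And>x y. f (x + y) = f x + f y"
  shows "f 0 = 0"
proof -
  have "f 0 + f 0 = f 0 + 0"
    using assms [of 0 0] by simp
  then show ?thesis
    by (rule add_left_imp_eq)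
qed

lemma additive_sum:
  fixes f :: "'a::ab_group_add \<Rightarrow> 'b::ab_group_add"
  assumes "\<And>x y. f (x + y) = f x + f y"
  shows "f (\<Sum>i\<in>A. g i) = (\<Sum>i\<in>A. f (g i))"
  using sum_comp_morphism [of f g A] additive_0 [OF assms] assms by (simp add: comp_def)

lemma derivation_add: "is_derivation D \<Longrightarrow> D (x + y) = D x + D y"
  and derivation_mult: "is_derivation D \<Longrightarrow> D (x * y) = D x * y + x * D y"
  by (simp_all add: is_derivation_def)

lemma derivation_0: "is_derivation D \<Longrightarrow> D 0 = 0"
  by (rule additive_0 [OF derivation_add])

lemma derivation_1: "is_derivation D \<Longrightarrow> D 1 = 0"
  using derivation_mult [of D 1 1] by simp

lemma derivation_uminus: "is_derivation D \<Longrightarrow> D (- x) = - D x"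
  using derivation_add [of D x "- x"] by (simp add: derivation_0 add_eq_0_iff)

lemma derivation_diff: "is_derivation D \<Longrightarrow> D (x - y) = D x - D y"
  using derivation_add [of D x "- y"] by (simp add: derivation_uminus)

lemma derivation_of_nat: "is_derivation D \<Longrightarrow> D (of_nat k) = 0"
  by (induction k) (simp_all add: derivation_0 derivation_1 derivation_add)

lemma derivation_numeral: "is_derivation D \<Longrightarrow> D (numeral w) = 0"
  using derivation_of_nat [of D "numeral w"] by simp

lemmas derivation_simps =
  derivation_add derivation_mult derivation_0 derivation_1 derivation_uminus derivation_diff
  derivation_of_nat derivation_numeral

lemma derivation_power:
  fixes D :: "'c::comm_ring_1 \<Rightarrow> 'c"
  assumes "is_derivation D"
  shows "D (x ^ k) = of_nat k * x ^ (k - 1) * D x"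
proof (induction k)
  case (Suc k)
  then show ?case
    by (cases k) (simp_all add: assms derivation_simps algebra_simps)
qed (simp add: assms derivation_1)

lemma central_derivation:
  assumes D: "is_derivation D" and x: "central x"
  shows "central (D x)"
  unfolding central_def
proof
  fix z
  have "D (x * z) = D (z * x)"
    using x by (simp add: central_def)
  then show "D x * z = z * D x"
    using x by (simp add: D derivation_mult central_def)
qed

section \<open>The centre as a commutative ring\<close>

typedef (overloaded) 'a center = "{x :: 'a :: ring_1. central x}"
  morphisms of_center to_center
  using central_0 by blast

instantiation center :: (ring_1) comm_ring_1
begin

definition "0 = to_center 0"
definition "1 = to_center 1"
definition "x + y = to_center (of_center x + of_center y)"
definition "x - y = to_center (of_center x - of_center y)"
definition "- x = to_center (- of_center x)"
definition "x * y = to_center (of_center x * of_center y)"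

lemma central_of_center [simp]: "central (of_center x)"
  using of_center by blast

lemma of_center_to_center [simp]: "central x \<Longrightarrow> of_center (to_center x) = x"
  by (simp add: to_center_inverse)

lemma of_center_ring_simps [simp]:
  "of_center 0 = 0" "of_center 1 = 1"
  "of_center (x + y) = of_center x + of_center y"
  "of_center (x - y) = of_center x - of_center y"
  "of_center (- x) = - of_center x"
  "of_center (x * y) = of_center x * of_center y"
  by (simp_all add: zero_center_def one_center_def plus_center_def minus_center_def
      uminus_center_def times_center_def)

instance
  by standard (simp_all add: of_center_inject [symmetric] algebra_simps central_mult_left)

end

lemma of_center_of_nat [simp]: "of_center (of_nat k) = of_nat k"
  by (induction k) simp_all

lemma of_center_numeral [simp]: "of_center (numeral w) = numeral w"
  by (metis of_center_of_nat of_nat_numeral)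

lemma of_center_power [simp]: "of_center (x ^ k) = of_center x ^ k"
  by (induction k) simp_all

lemma is_unit_ring_to_center:
  assumes "central x" and "is_unit_ring x"
  shows "is_unit_ring (to_center x)"
  unfolding is_unit_ring_def
proof (intro exI conjI)
  show "to_center x * to_center (rinv x) = 1" "to_center (rinv x) * to_center x = 1"
    using assms by (simp_all add: of_center_inject [symmetric] central_rinv rinv_unit)
qed

lemma of_center_rinv:
  assumes "is_unit_ring x"
  shows "of_center (rinv x) = rinv (of_center x)"
  by (metis assms of_center_ring_simps(2,6) rinv_eqI rinv_unit)

lemma is_unit_ring_of_nat_center:
  assumes "is_unit_ring (of_nat m :: 'a::ring_1)"
  shows "is_unit_ring (of_nat m :: 'a center)"
proof -
  have "to_center (of_nat m :: 'a) = of_nat m"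
    by (simp add: of_center_inject [symmetric])
  with is_unit_ring_to_center [OF central_of_nat assms] show ?thesis
    by simp
qed

definition center_der :: "('a::ring_1 \<Rightarrow> 'a) \<Rightarrow> 'a center \<Rightarrow> 'a center" where
  "center_der D x = to_center (D (of_center x))"

lemma of_center_center_der [simp]:
  "is_derivation D \<Longrightarrow> of_center (center_der D x) = D (of_center x)"
  by (simp add: center_der_def central_derivation)

lemma is_derivation_center_der:
  "is_derivation D \<Longrightarrow> is_derivation (center_der D)"
  by (simp add: is_derivation_def of_center_inject [symmetric])

lemma op_pow1_0 [simp]: "op_pow1 D c e 0 = op_one"
  by (simp add: op_pow1_def)

lemma op_pow1_Suc: "op_pow1 D c e (Suc j) = op_mul1 D c e (op_pow1 D c e j)"
  by (simp add: op_pow1_def)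

lemma op_pow1_Suc_apply:
  "op_pow1 D c e (Suc j) m =
     c * ((if m = 0 then 0 else op_pow1 D c e j (m - 1)) + D (op_pow1 D c e j m)) + e * op_pow1 D c e j m"
  by (simp add: op_pow1_Suc op_mul1_def)

lemma op_pow1_above:
  assumes "D 0 = 0" and "j < m"
  shows "op_pow1 D c e j m = 0"
  using assms(2)
proof (induction j arbitrary: m)
  case 0
  then show ?case by (simp add: op_one_def)
next
  case (Suc j)
  then show ?case by (simp add: op_pow1_Suc_apply assms(1))
qed

lemma op_pow1_diag:
  assumes "D 0 = 0"
  shows "op_pow1 D c e j j = c ^ j"
  by (induction j) (simp_all add: op_one_def op_pow1_Suc_apply op_pow1_above assms)

lemma op_pow1_monic_subdiag:
  assumes "is_derivation D"
  shows "op_pow1 D 1 b (Suc j) j = of_nat (Suc j) * b"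
proof (induction j)
  case 0
  then show ?case by (simp add: op_pow1_Suc_apply op_one_def assms derivation_simps)
next
  case (Suc j)
  then show ?case
    using op_pow1_diag [of D 1 b "Suc j"]
    by (simp add: op_pow1_Suc_apply [of D 1 b "Suc j"] assms derivation_simps algebra_simps)
qed

lemma op_pow1_of_center:
  assumes "\<And>x. X (of_center x) = of_center (d x)"
  shows "op_pow1 X (of_center c) (of_center e) j m = of_center (op_pow1 d c e j m)"
proof (induction j arbitrary: m)
  case 0
  then show ?case by (simp add: op_one_def)
next
  case (Suc j)
  then show ?case by (simp add: op_pow1_Suc_apply assms)
qed

section \<open>Subdiagonals of powers of a first-order operator over a commutative ring\<close>

definition ffact :: "nat \<Rightarrow> 'a::comm_ring_1 \<Rightarrow> 'a" where
  "ffact k x = (\<Prod>i<k. x - of_nat i)"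

lemma ffact_0 [simp]: "ffact 0 x = 1"
  by (simp add: ffact_def)

lemma ffact_Suc: "ffact (Suc k) x = ffact k x * (x - of_nat k)"
  by (simp add: ffact_def)

lemma ffact_Suc_shift: "ffact (Suc k) (x + 1) = (x + 1) * ffact k x"
  by (simp add: ffact_def prod.lessThan_Suc_shift del: prod.lessThan_Suc)

lemma ffact_of_nat: "ffact k (of_nat n) = of_nat (fact k * (n choose k))"
proof (induction k)
  case (Suc k)
  have absorb: "Suc k * (n choose Suc k) = (n - k) * (n choose k)"
    by (metis binomial_absorption binomial_absorb_comp)
  have "fact (Suc k) * (n choose Suc k) = fact k * (Suc k * (n choose Suc k))"
    by (simp only: fact_Suc of_nat_id mult_ac)
  also have "\<dots> = fact k * (n choose k) * (n - k)"
    by (simp only: absorb mult_ac)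
  finally have "fact (Suc k) * (n choose Suc k) = fact k * (n choose k) * (n - k)" .
  moreover have "of_nat (fact k * (n choose k)) * (of_nat n - of_nat k)
      = (of_nat (fact k * (n choose k) * (n - k)) :: 'a)"
    by (cases "k \<le> n") (simp_all add: of_nat_diff binomial_eq_0)
  ultimately show ?case
    by (simp add: ffact_Suc Suc.IH)
qed simp

lemma derivation_ffact_of_nat: "is_derivation D \<Longrightarrow> D (ffact k (of_nat j)) = 0"
  by (induction k) (simp_all add: ffact_def derivation_simps)

(* Applied with s = 1/lambda', y = lambda''/lambda' and N = n, so that T = 2 d y - y^2 below is
   twice the Schwarzian S(lambda); M = N - J. *)

context
  fixes d :: "'c::comm_ring_1 \<Rightarrow> 'c" and s y g N :: 'c
  assumes der: "is_derivation d" and ds: "d s = - (s * y)" and dN: "d N = 0"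
    and g: "2 * g = (N - 1) * s * y"
begin

lemma derivation_power_s: "d (s ^ j) = - (of_nat j * s ^ j * y)"
  by (induction j) (simp_all add: der derivation_mult derivation_1 ds algebra_simps)

lemma op_pow1_subdiag_step:
  fixes F G :: "'c \<Rightarrow> 'c"
  assumes prev: "\<And>i. K * op_pow1 d s g (i + k) i = s ^ (i + k) * G (of_nat (i + k))"
    and dK: "d K = 0"
    and base: "F (of_nat k) = 0"
    and step: "\<And>j. F (of_nat j + 1) =
      F (of_nat j) + p * (2 * d (G (of_nat j)) + (N - 1 - 2 * of_nat j) * y * G (of_nat j))"
  shows "2 * p * K * op_pow1 d s g (i + Suc k) i = s ^ (i + Suc k) * F (of_nat (i + Suc k))"
proof -
  have incr: "2 * p * K * (s * d (op_pow1 d s g j m) + g * op_pow1 d s g j m)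
      = s ^ Suc j * (F (of_nat j + 1) - F (of_nat j))"
    if "K * op_pow1 d s g j m = s ^ j * G (of_nat j)" for j m
  proof -
    have "2 * p * K * (s * d (op_pow1 d s g j m) + g * op_pow1 d s g j m)
        = p * (2 * s * d (K * op_pow1 d s g j m) + (2 * g) * (K * op_pow1 d s g j m))"
      by (simp add: der derivation_mult dK algebra_simps)
    also have "\<dots> = p * s ^ Suc j * (2 * d (G (of_nat j)) + (N - 1 - 2 * of_nat j) * y * G (of_nat j))"
      unfolding that g by (simp add: der derivation_mult derivation_power_s algebra_simps)
    also have "\<dots> = s ^ Suc j * (F (of_nat j + 1) - F (of_nat j))"
      by (simp only: step add_diff_cancel_left') (simp add: algebra_simps)
    finally show ?thesis .
  qed
  show ?thesis
  proof (induction i)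
    case 0
    have "op_pow1 d s g (Suc k) 0 = s * d (op_pow1 d s g k 0) + g * op_pow1 d s g k 0"
      by (simp add: op_pow1_Suc_apply)
    then show ?case
      using incr [OF prev [of 0, simplified]] base by (simp add: add.commute)
  next
    case (Suc i)
    let ?R = "op_pow1 d s g (i + Suc k) (Suc i)"
    have "op_pow1 d s g (Suc i + Suc k) (Suc i)
        = s * op_pow1 d s g (i + Suc k) i + (s * d ?R + g * ?R)"
      by (simp add: op_pow1_Suc_apply algebra_simps)
    moreover have "K * ?R = s ^ (i + Suc k) * G (of_nat (i + Suc k))"
      using prev [of "Suc i"] by simp
    ultimately show ?case
      using incr [of "i + Suc k" "Suc i"] Suc.IH by (simp add: algebra_simps add.commute)
  qed
qed

lemma op_pow1_subdiag_ffact_step: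
  fixes F G :: "'c \<Rightarrow> 'c"
  assumes prev: "\<And>i. K * op_pow1 d s g (i + k) i
      = s ^ (i + k) * (ffact k (of_nat (i + k)) * G (of_nat (i + k)))"
    and dK: "d K = 0"
    and step: "\<And>j. (of_nat j + 1) * F (of_nat j + 1) = (of_nat j - of_nat k) * F (of_nat j)
      + p * (2 * d (G (of_nat j)) + (N - 1 - 2 * of_nat j) * y * G (of_nat j))"
  shows "2 * p * K * op_pow1 d s g (i + Suc k) i
    = s ^ (i + Suc k) * (ffact (Suc k) (of_nat (i + Suc k)) * F (of_nat (i + Suc k)))"
proof (rule op_pow1_subdiag_step
    [where G = "\<lambda>J::'c. ffact k J * G J" and F = "\<lambda>J::'c. ffact (Suc k) J * F J"])
  fix j
  have "ffact (Suc k) (of_nat j + 1) * F (of_nat j + 1)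
      = ffact k (of_nat j) * ((of_nat j + 1) * F (of_nat j + 1))"
    by (simp only: ffact_Suc_shift mult_ac)
  also have "\<dots> = ffact (Suc k) (of_nat j) * F (of_nat j)
      + p * (2 * d (ffact k (of_nat j) * G (of_nat j))
        + (N - 1 - 2 * of_nat j) * y * (ffact k (of_nat j) * G (of_nat j)))"
    by (simp only: step) (simp add: ffact_Suc der derivation_mult derivation_ffact_of_nat algebra_simps)
  finally show "ffact (Suc k) (of_nat j + 1) * F (of_nat j + 1) = \<dots>" .
qed (simp_all add: prev dK ffact_Suc)

lemma op_pow1_subdiag1:
  assumes "J = of_nat (i + 1)"
  shows "2 * op_pow1 d s g (i + 1) i = s ^ (i + 1) * (ffact 1 J * ((N - J) * y))"
proof -
  have "2 * 1 * 1 * op_pow1 d s g (i + Suc 0) i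
      = s ^ (i + Suc 0) * (ffact (Suc 0) (of_nat (i + Suc 0)) * ((N - of_nat (i + Suc 0)) * y))"
    by (rule op_pow1_subdiag_ffact_step [where G = "\<lambda>_. 1"])
      (simp_all add: op_pow1_diag der derivation_simps algebra_simps)
  then show ?thesis
    by (simp add: assms)
qed

lemma op_pow1_subdiag2:
  assumes J: "J = of_nat (i + 2)" and M: "M = N - J" and T: "T = 2 * d y - y ^ 2"
  shows "24 * op_pow1 d s g (i + 2) i
    = s ^ (i + 2) * (ffact 2 J * ((J + 3 * M + 1) * T + 3 * M * (M + 1) * y ^ 2))"
proof -
  have dy: "2 * d y = T + y ^ 2"
    by (simp add: T)
  define G :: "'c \<Rightarrow> 'c" where "G J = (N - J) * y" for J
  define F :: "'c \<Rightarrow> 'c" where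
    "F J = (J + 3 * (N - J) + 1) * T + 3 * (N - J) * (N - J + 1) * y ^ 2" for J
  have "2 * 6 * 2 * op_pow1 d s g (i + Suc 1) i
      = s ^ (i + Suc 1) * (ffact (Suc 1) (of_nat (i + Suc 1)) * F (of_nat (i + Suc 1)))"
  proof (rule op_pow1_subdiag_ffact_step)
    show "2 * op_pow1 d s g (i + 1) i = s ^ (i + 1) * (ffact 1 (of_nat (i + 1)) * G (of_nat (i + 1)))" for i
      unfolding G_def by (rule op_pow1_subdiag1) simp
  next
    fix j
    define J where "J = (of_nat j :: 'c)"
    have dG: "2 * d (G J) = (N - J) * (T + y ^ 2)"
      unfolding dy [symmetric] G_def by (simp add: J_def der derivation_simps dN algebra_simps)
    show "(J + 1) * F (J + 1) = (J - of_nat 1) * F J + 6 * (2 * d (G J) + (N - 1 - 2 * J) * y * G J)"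
      unfolding dG by (simp add: F_def G_def power2_eq_square algebra_simps)
  qed (simp add: der derivation_numeral)
  then show ?thesis
    by (simp add: J M F_def numeral_2_eq_2)
qed

lemma op_pow1_subdiag3:
  assumes J: "J = of_nat (i + 3)" and M: "M = N - J" and T: "T = 2 * d y - y ^ 2"
  shows "48 * op_pow1 d s g (i + 3) i = s ^ (i + 3) * (ffact 3 J *
    ((J + 2 * M + 1) * d T + M * (J + 3 * M + 3) * y * T + M * (M + 1) * (M + 2) * y ^ 3))"
proof -
  have dy: "2 * d y = T + y ^ 2"
    by (simp add: T)
  define G :: "'c \<Rightarrow> 'c" where
    "G J = (J + 3 * (N - J) + 1) * T + 3 * (N - J) * (N - J + 1) * y ^ 2" for J
  define F :: "'c \<Rightarrow> 'c" where
    "F J = (J + 2 * (N - J) + 1) * d T + (N - J) * (J + 3 * (N - J) + 3) * y * T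
      + (N - J) * (N - J + 1) * (N - J + 2) * y ^ 3" for J
  have "2 * 1 * 24 * op_pow1 d s g (i + Suc 2) i
      = s ^ (i + Suc 2) * (ffact (Suc 2) (of_nat (i + Suc 2)) * F (of_nat (i + Suc 2)))"
  proof (rule op_pow1_subdiag_ffact_step)
    show "24 * op_pow1 d s g (i + 2) i = s ^ (i + 2) * (ffact 2 (of_nat (i + 2)) * G (of_nat (i + 2)))" for i
      using op_pow1_subdiag2 [OF refl refl T, of i] by (simp add: G_def)
  next
    fix j
    define J where "J = (of_nat j :: 'c)"
    have dG: "2 * d (G J) = 2 * (J + 3 * (N - J) + 1) * d T + 6 * (N - J) * (N - J + 1) * y * (T + y ^ 2)"
      unfolding dy [symmetric] G_def by (simp add: J_def der derivation_simps derivation_power dN algebra_simps)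
    show "(J + 1) * F (J + 1) = (J - of_nat 2) * F J + 1 * (2 * d (G J) + (N - 1 - 2 * J) * y * G J)"
      unfolding dG by (simp add: F_def G_def power2_eq_square power3_eq_cube algebra_simps)
  qed (simp add: der derivation_numeral)
  then show ?thesis
    by (simp add: J M F_def numeral_3_eq_3)
qed

lemma op_pow1_subdiag4:
  assumes J: "J = of_nat (i + 4)" and M: "M = N - J" and T: "T = 2 * d y - y ^ 2"
  shows "5760 * op_pow1 d s g (i + 4) i = s ^ (i + 4) * (ffact 4 J *
    (12 * (3 * J + 5 * M + 3) * d (d T) + 60 * M * (J + 2 * M + 2) * y * d T
      + ((J + 3 * M + 1) * (5 * J + 15 * M + 7) + 24 * M) * T ^ 2
      + 30 * M * (M + 1) * (J + 3 * M + 5) * y ^ 2 * T + 15 * M * (M + 1) * (M + 2) * (M + 3) * y ^ 4))"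
proof -
  have dy: "2 * d y = T + y ^ 2"
    by (simp add: T)
  define G :: "'c \<Rightarrow> 'c" where
    "G J = (J + 2 * (N - J) + 1) * d T + (N - J) * (J + 3 * (N - J) + 3) * y * T
      + (N - J) * (N - J + 1) * (N - J + 2) * y ^ 3" for J
  define F :: "'c \<Rightarrow> 'c" where
    "F J = 12 * (3 * J + 5 * (N - J) + 3) * d (d T) + 60 * (N - J) * (J + 2 * (N - J) + 2) * y * d T
      + ((J + 3 * (N - J) + 1) * (5 * J + 15 * (N - J) + 7) + 24 * (N - J)) * T ^ 2
      + 30 * (N - J) * (N - J + 1) * (J + 3 * (N - J) + 5) * y ^ 2 * T
      + 15 * (N - J) * (N - J + 1) * (N - J + 2) * (N - J + 3) * y ^ 4" for J
  have "2 * 60 * 48 * op_pow1 d s g (i + Suc 3) i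
      = s ^ (i + Suc 3) * (ffact (Suc 3) (of_nat (i + Suc 3)) * F (of_nat (i + Suc 3)))"
  proof (rule op_pow1_subdiag_ffact_step)
    show "48 * op_pow1 d s g (i + 3) i = s ^ (i + 3) * (ffact 3 (of_nat (i + 3)) * G (of_nat (i + 3)))" for i
      using op_pow1_subdiag3 [OF refl refl T, of i] by (simp add: G_def)
  next
    fix j
    define J where "J = (of_nat j :: 'c)"
    have dG: "2 * d (G J) = 2 * (J + 2 * (N - J) + 1) * d (d T)
        + (N - J) * (J + 3 * (N - J) + 3) * ((T + y ^ 2) * T + 2 * y * d T)
        + 3 * (N - J) * (N - J + 1) * (N - J + 2) * y ^ 2 * (T + y ^ 2)"
      unfolding dy [symmetric] G_def by (simp add: J_def der derivation_simps derivation_power dN algebra_simps)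
    show "(J + 1) * F (J + 1) = (J - of_nat 3) * F J + 60 * (2 * d (G J) + (N - 1 - 2 * J) * y * G J)"
      unfolding dG by (simp add: F_def G_def power2_eq_square power3_eq_cube power4_eq_xxxx algebra_simps)
  qed (simp add: der derivation_numeral)
  then show ?thesis
    by (simp add: J M F_def eval_nat_numeral)
qed

end

section \<open>Expansions in powers of \<open>D + b\<close>\<close>

lemma sum_atMost_shift:
  fixes f :: "nat \<Rightarrow> 'a::comm_monoid_add"
  assumes "f n = 0"
  shows "(\<Sum>i\<le>n. if i = 0 then 0 else f (i - 1)) = (\<Sum>i\<le>n. f i)"
proof (cases n)
  case (Suc k)
  have "(\<Sum>i\<le>Suc k. if i = 0 then 0 else f (i - 1)) = (\<Sum>i\<le>k. f i)"
    by (simp only: sum.atMost_Suc_shift) simp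
  with Suc assms show ?thesis
    by simp
qed (use assms in simp)

definition op_expand :: "('a::ring_1 \<Rightarrow> 'a) \<Rightarrow> 'a \<Rightarrow> nat \<Rightarrow> (nat \<Rightarrow> 'a) \<Rightarrow> nat \<Rightarrow> 'a"
  where
  "op_expand D b n c m = (\<Sum>j\<le>n. c j * op_pow1 D 1 b j m)"

lemma op_expand_exists:
  assumes D0: "D 0 = 0" and M: "\<And>m. n < m \<Longrightarrow> M m = 0"
  shows "\<exists>c. M = op_expand D b n c"
  using M
proof (induction n arbitrary: M)
  case 0
  have "M = op_expand D b 0 (\<lambda>_. M 0)"
  proof
    fix m show "M m = op_expand D b 0 (\<lambda>_. M 0) m"
      using 0 by (cases m) (simp_all add: op_expand_def op_one_def)
  qed
  then show ?case by blast
next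
  case (Suc n)
  define M' where "M' m = M m - M (Suc n) * op_pow1 D 1 b (Suc n) m" for m
  have "M' m = 0" if "n < m" for m
  proof (cases "m = Suc n")
    case True
    then show ?thesis by (simp add: M'_def op_pow1_diag D0)
  next
    case False
    with that Suc.prems show ?thesis by (simp add: M'_def op_pow1_above D0)
  qed
  then obtain c where c: "M' = op_expand D b n c"
    using Suc.IH by blast
  have "M = op_expand D b (Suc n) (c(Suc n := M (Suc n)))"
  proof
    fix m
    have "M m = M' m + M (Suc n) * op_pow1 D 1 b (Suc n) m"
      by (simp add: M'_def)
    also have "\<dots> = op_expand D b (Suc n) (c(Suc n := M (Suc n))) m"
      by (simp add: c op_expand_def)
    finally show "M m = op_expand D b (Suc n) (c(Suc n := M (Suc n))) m" .
  qed
  then show ?case by blast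
qed

lemma op_expand_unique:
  assumes D0: "D 0 = 0" and eq: "op_expand D b n c = op_expand D b n c'" and "j \<le> n"
  shows "c j = c' j"
  using eq \<open>j \<le> n\<close>
proof (induction n arbitrary: j)
  case 0
  then show ?case
    using fun_cong [OF 0(1), of 0] by (simp add: op_expand_def op_one_def)
next
  case (Suc n)
  have top: "c (Suc n) = c' (Suc n)"
    using fun_cong [OF Suc.prems(1), of "Suc n"]
    by (simp add: op_expand_def op_pow1_diag op_pow1_above D0)
  then have "op_expand D b n c = op_expand D b n c'"
    using Suc.prems(1) by (simp add: op_expand_def fun_eq_iff)
  with Suc.IH top Suc.prems(2) show ?case
    by (cases "j = Suc n") simp_all
qed

lemma op_expand_cong:
  "(\<And>j. j \<le> n \<Longrightarrow> c j = c' j) \<Longrightarrow> op_expand D b n c = op_expand D b n c'"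
  by (simp add: op_expand_def fun_eq_iff)

lemma wilczynski_sum_eq_op_expand:
  assumes "2 \<le> n"
  shows "op_pow1 D 1 b n m + (\<Sum>k=2..n. of_nat (n choose k) * I k * op_pow1 D 1 b (n - k) m)
    = op_expand D b n (\<lambda>j. if j = n then 1 else if j = n - 1 then 0
        else of_nat (n choose (n - j)) * I (n - j)) m"
proof -
  obtain l where n: "n = Suc (Suc l)"
    using assms by (metis add_2_eq_Suc le_Suc_ex)
  have "(\<Sum>k=2..n. of_nat (n choose k) * I k * op_pow1 D 1 b (n - k) m)
      = (\<Sum>j\<le>l. of_nat (n choose (n - j)) * I (n - j) * op_pow1 D 1 b j m)"
    by (rule sum.reindex_bij_witness [of _ "\<lambda>j. n - j" "\<lambda>k. n - k"]) (auto simp: n)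
  then show ?thesis
    by (simp add: op_expand_def n add.commute)
qed

lemma wilczynski_op_expand:
  fixes D :: "'a::ring_1 \<Rightarrow> 'a"
  assumes units: "\<And>m. 0 < m \<Longrightarrow> is_unit_ring (of_nat m :: 'a)" and D: "is_derivation D"
    and n: "2 \<le> n" and top: "c n = 1" and sub: "c (n - 1) = 0" and k: "k \<in> {2..n}"
  shows "wilczynski D n (op_expand D b n c) k = rinv (of_nat (n choose k)) * c (n - k)"
proof -
  define coef where "coef I j = (if j = n then 1 else if j = n - 1 then 0
    else of_nat (n choose (n - j)) * I (n - j))" for I :: "nat \<Rightarrow> 'a" and j
  define I where "I k = (if k \<in> {2..n} then rinv (of_nat (n choose k)) * c (n - k) else 0)" for k
  have D0: "D 0 = 0"
    using D by (rule derivation_0)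
  have choose_unit: "is_unit_ring (of_nat (n choose k) :: 'a)" if "k \<le> n" for k
    using units that by simp
  obtain l where l: "n = Suc (Suc l)"
    using n by (metis add_2_eq_Suc le_Suc_ex)
  have "op_expand D b n c (n - 1) = of_nat n * b"
    using top sub by (simp add: op_expand_def l op_pow1_above D0 op_pow1_monic_subdiag D)
  then have b1: "rinv (of_nat n) * op_expand D b n c (n - 1) = b"
    using rinv_unit (2) [OF units [of n]] n by (simp add: mult.assoc [symmetric])
  have coef_I: "coef I j = c j" if "j \<le> n" for j
    using that top sub choose_unit [of "n - j"]
    by (auto simp: coef_def I_def rinv_unit mult.assoc [symmetric])
  have sum_coef: "op_pow1 D 1 b n m + (\<Sum>k=2..n. of_nat (n choose k) * J k * op_pow1 D 1 b (n - k) m)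
      = op_expand D b n (coef J) m" for J m
    unfolding coef_def by (rule wilczynski_sum_eq_op_expand [OF n])
  have "wilczynski D n (op_expand D b n c) = I"
    unfolding wilczynski_def Let_def b1
  proof (rule the_equality)
    have c_coef: "op_expand D b n c = op_expand D b n (coef I)"
      using coef_I by (auto intro: op_expand_cong)
    show "(\<forall>k. k \<notin> {2..n} \<longrightarrow> I k = 0) \<and> (\<forall>m. op_expand D b n c m = op_pow1 D 1 b n m
        + (\<Sum>k=2..n. of_nat (n choose k) * I k * op_pow1 D 1 b (n - k) m))"
    proof
      show "\<forall>k. k \<notin> {2..n} \<longrightarrow> I k = 0"
        by (simp add: I_def)
      show "\<forall>m. op_expand D b n c m = op_pow1 D 1 b n m
        + (\<Sum>k=2..n. of_nat (n choose k) * I k * op_pow1 D 1 b (n - k) m)"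
        by (simp add: sum_coef c_coef)
    qed
  next
    fix I'
    assume I': "(\<forall>k. k \<notin> {2..n} \<longrightarrow> I' k = 0) \<and> (\<forall>m. op_expand D b n c m = op_pow1 D 1 b n m
        + (\<Sum>k=2..n. of_nat (n choose k) * I' k * op_pow1 D 1 b (n - k) m))"
    then have "op_expand D b n (coef I') = op_expand D b n c"
      by (simp add: fun_eq_iff sum_coef)
    then have coef_I': "coef I' j = c j" if "j \<le> n" for j
      by (rule op_expand_unique [of D, OF D0 _ that])
    show "I' = I"
    proof
      fix k
      show "I' k = I k"
      proof (cases "k \<in> {2..n}")
        case True
        then have "n - k \<noteq> n" "n - k \<noteq> n - 1" "n - (n - k) = k"
          by auto
        then have "of_nat (n choose k) * I' k = of_nat (n choose k) * I k"
          using coef_I' [of "n - k"] coef_I [of "n - k"] by (simp add: coef_def)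
        then show ?thesis
          using choose_unit True by (auto intro: unit_cancel_left)
      qed (use I' I_def in auto)
    qed
  qed
  with k show ?thesis
    by (simp add: I_def)
qed

lemma op_expand_sum:
  "op_expand D b n (\<lambda>i. \<Sum>j\<in>A. x j * G j i) m = (\<Sum>j\<in>A. x j * op_expand D b n (G j) m)"
proof -
  have "op_expand D b n (\<lambda>i. \<Sum>j\<in>A. x j * G j i) m
      = (\<Sum>i\<le>n. \<Sum>j\<in>A. x j * (G j i * op_pow1 D 1 b i m))"
    by (simp add: op_expand_def sum_distrib_right mult.assoc)
  also have "\<dots> = (\<Sum>j\<in>A. x j * op_expand D b n (G j) m)"
    by (subst sum.swap) (simp add: op_expand_def sum_distrib_left)
  finally show ?thesis .
qed

context
  fixes D :: "'a::ring_1 \<Rightarrow> 'a" and b :: 'a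
  assumes D: "is_derivation D"
begin

lemma op_expand_op_mul1:
  assumes "Q n = 0"
  shows "op_expand D b n (op_mul1 (\<lambda>x. D x + b * x - x * b) c e Q) m
    = op_mul1 D c (c * b + e) (op_expand D b n Q) m"
proof -
  define P where "P i = op_pow1 D 1 b i m" for i
  define P' where "P' i = op_pow1 D 1 b i (m - 1)" for i
  have P_Suc: "P (Suc i) = (if m = 0 then 0 else P' i) + D (P i) + b * P i" for i
    by (simp add: P_def P'_def op_pow1_Suc_apply)
  have "op_expand D b n (op_mul1 (\<lambda>x. D x + b * x - x * b) c e Q) m
      = (\<Sum>i\<le>n. (if i = 0 then 0 else c * Q (i - 1) * P i)
          + (c * (D (Q i) + b * Q i - Q i * b) + e * Q i) * P i)"
    unfolding op_expand_def P_def
    by (rule sum.cong) (auto simp: op_mul1_def distrib_left distrib_right)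
  also have "\<dots> = (\<Sum>i\<le>n. if i = 0 then 0 else c * Q (i - 1) * P i)
      + (\<Sum>i\<le>n. (c * (D (Q i) + b * Q i - Q i * b) + e * Q i) * P i)"
    by (rule sum.distrib)
  also have "(\<Sum>i\<le>n. if i = 0 then 0 else c * Q (i - 1) * P i) = (\<Sum>i\<le>n. c * Q i * P (Suc i))"
    using sum_atMost_shift [of "\<lambda>i. c * Q i * P (Suc i)" n] assms by (simp cong: if_cong)
  also have "(\<Sum>i\<le>n. c * Q i * P (Suc i))
      + (\<Sum>i\<le>n. (c * (D (Q i) + b * Q i - Q i * b) + e * Q i) * P i)
      = (\<Sum>i\<le>n. c * ((if m = 0 then 0 else Q i * P' i) + (D (Q i) * P i + Q i * D (P i)))
          + (c * b + e) * (Q i * P i))"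
    unfolding sum.distrib [symmetric]
    by (rule sum.cong) (simp_all add: P_Suc algebra_simps)
  also have "\<dots> = op_mul1 D c (c * b + e) (op_expand D b n Q) m"
    by (simp add: op_mul1_def op_expand_def P_def P'_def additive_sum [OF derivation_add [OF D]] D derivation_simps
        distrib_left sum_distrib_left sum.distrib)
  finally show ?thesis .
qed

lemma op_expand_op_pow1:
  assumes "j \<le> n"
  shows "op_expand D b n (op_pow1 (\<lambda>x. D x + b * x - x * b) c e j) = op_pow1 D c (c * b + e) j"
  using assms
proof (induction j)
  case 0
  have "op_expand D b n op_one m = (\<Sum>i\<le>n. if i = 0 then op_pow1 D 1 b 0 m else 0)" for m
    unfolding op_expand_def by (rule sum.cong) (simp_all add: op_one_def)
  then show ?case
    by (simp add: fun_eq_iff)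
next
  case (Suc j)
  have "op_pow1 (\<lambda>x. D x + b * x - x * b) c e j n = 0"
    using Suc.prems by (simp add: op_pow1_above D derivation_0)
  then have "op_expand D b n (op_pow1 (\<lambda>x. D x + b * x - x * b) c e (Suc j)) m
      = op_pow1 D c (c * b + e) (Suc j) m" for m
    using Suc by (simp add: op_pow1_Suc op_expand_op_mul1)
  then show ?case ..
qed

end

definition op_subst ::
    "('a::ring_1 \<Rightarrow> 'a) \<Rightarrow> ('a \<Rightarrow> 'a) \<Rightarrow> 'a \<Rightarrow> nat \<Rightarrow> (nat \<Rightarrow> 'a) \<Rightarrow> nat \<Rightarrow> 'a"
  where
  "op_subst D lam sg n Q m = (\<Sum>i\<le>n. lam (Q i) * op_pow1 D sg 0 i m)"

context
  fixes D :: "'a::ring_1 \<Rightarrow> 'a" and lam :: "'a \<Rightarrow> 'a" and sg :: 'a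
  assumes D: "is_derivation D"
    and lam_add: "\<And>x y. lam (x + y) = lam x + lam y" and lam_mult: "\<And>x y. lam (x * y) = lam x * lam y"
    and lam_1: "lam 1 = 1"
    and sg: "central sg" and chain: "\<And>x. sg * D (lam x) = lam (D x)"
begin

lemma op_subst_op_mul1:
  assumes "Q n = 0"
  shows "op_subst D lam sg n (op_mul1 D 1 b Q) m = op_mul1 D sg (lam b) (op_subst D lam sg n Q) m"
proof -
  define S where "S i = op_pow1 D sg 0 i m" for i
  define S' where "S' i = op_pow1 D sg 0 i (m - 1)" for i
  have S_Suc: "S (Suc i) = sg * ((if m = 0 then 0 else S' i) + D (S i))" for i
    by (simp add: S_def S'_def op_pow1_Suc_apply)
  have "op_subst D lam sg n (op_mul1 D 1 b Q) m
      = (\<Sum>i\<le>n. (if i = 0 then 0 else lam (Q (i - 1)) * S i)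
          + (lam (D (Q i)) + lam b * lam (Q i)) * S i)"
    unfolding op_subst_def S_def
    by (rule sum.cong) (auto simp: op_mul1_def lam_add lam_mult additive_0 [OF lam_add] distrib_right)
  also have "\<dots> = (\<Sum>i\<le>n. if i = 0 then 0 else lam (Q (i - 1)) * S i)
      + (\<Sum>i\<le>n. (lam (D (Q i)) + lam b * lam (Q i)) * S i)"
    by (rule sum.distrib)
  also have "(\<Sum>i\<le>n. if i = 0 then 0 else lam (Q (i - 1)) * S i) = (\<Sum>i\<le>n. lam (Q i) * S (Suc i))"
    using sum_atMost_shift [of "\<lambda>i. lam (Q i) * S (Suc i)" n] assms
    by (simp add: additive_0 [OF lam_add] cong: if_cong)
  also have "(\<Sum>i\<le>n. lam (Q i) * S (Suc i)) + (\<Sum>i\<le>n. (lam (D (Q i)) + lam b * lam (Q i)) * S i)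
      = (\<Sum>i\<le>n. sg * ((if m = 0 then 0 else lam (Q i) * S' i) + (D (lam (Q i)) * S i + lam (Q i) * D (S i)))
          + lam b * (lam (Q i) * S i))"
    unfolding sum.distrib [symmetric]
  proof (rule sum.cong)
    fix i
    have "lam (Q i) * S (Suc i) = sg * (lam (Q i) * ((if m = 0 then 0 else S' i) + D (S i)))"
      unfolding S_Suc by (metis central_mult_left mult.assoc sg)
    moreover have "lam (D (Q i)) * S i = sg * (D (lam (Q i)) * S i)"
      by (simp add: chain mult.assoc [symmetric])
    ultimately show "lam (Q i) * S (Suc i) + (lam (D (Q i)) + lam b * lam (Q i)) * S i
      = sg * ((if m = 0 then 0 else lam (Q i) * S' i) + (D (lam (Q i)) * S i + lam (Q i) * D (S i)))
          + lam b * (lam (Q i) * S i)"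
      by (simp add: algebra_simps)
  qed simp
  also have "\<dots> = op_mul1 D sg (lam b) (op_subst D lam sg n Q) m"
    by (simp add: op_mul1_def op_subst_def S_def S'_def additive_sum [OF derivation_add [OF D]] D derivation_simps
        distrib_left sum_distrib_left sum.distrib)
  finally show ?thesis .
qed

lemma op_subst_op_pow1:
  assumes "j \<le> n"
  shows "op_subst D lam sg n (op_pow1 D 1 b j) = op_pow1 D sg (lam b) j"
  using assms
proof (induction j)
  case 0
  have "op_subst D lam sg n op_one m = (\<Sum>i\<le>n. if i = 0 then op_pow1 D sg 0 0 m else 0)" for m
    unfolding op_subst_def by (rule sum.cong) (simp_all add: op_one_def additive_0 [OF lam_add] lam_1)
  then show ?case
    by (simp add: fun_eq_iff)
next
  case (Suc j)
  have "op_pow1 D 1 b j n = 0"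
    using Suc.prems by (simp add: op_pow1_above D derivation_0)
  then have "op_subst D lam sg n (op_pow1 D 1 b (Suc j)) m = op_pow1 D sg (lam b) (Suc j) m" for m
    using Suc by (simp add: op_pow1_Suc op_subst_op_mul1)
  then show ?case ..
qed

lemma op_subst_op_expand:
  "op_subst D lam sg n (op_expand D b n c) m = (\<Sum>j\<le>n. lam (c j) * op_pow1 D sg (lam b) j m)"
proof -
  have "op_subst D lam sg n (op_expand D b n c) m
      = (\<Sum>i\<le>n. \<Sum>j\<le>n. lam (c j) * (lam (op_pow1 D 1 b j i) * op_pow1 D sg 0 i m))"
    by (simp add: op_subst_def op_expand_def additive_sum [OF lam_add] lam_mult sum_distrib_right mult.assoc)
  also have "\<dots> = (\<Sum>j\<le>n. lam (c j) * op_subst D lam sg n (op_pow1 D 1 b j) m)"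
    by (subst sum.swap) (simp add: op_subst_def sum_distrib_left)
  finally show ?thesis
    by (simp add: op_subst_op_pow1)
qed

end

section \<open>The change of variable\<close>

lemma sum_atMost_top:
  fixes f :: "nat \<Rightarrow> 'a::comm_monoid_add"
  assumes "k \<le> n" and "\<And>j. j < n - k \<Longrightarrow> f j = 0"
  shows "(\<Sum>j\<le>n. f j) = (\<Sum>t\<le>k. f (n - t))"
proof -
  have "(\<Sum>j\<le>n. f j) = (\<Sum>j\<in>{n - k..n}. f j)"
    by (rule sum.mono_neutral_right) (auto simp: assms(2))
  also have "\<dots> = (\<Sum>t\<le>k. f (n - t))"
    by (rule sum.reindex_bij_witness [of _ "\<lambda>t. n - t" "\<lambda>j. n - j"]) (use assms(1) in auto)
  finally show ?thesis .
qed

lemma sum_atMost_2_3_4: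
  fixes f :: "nat \<Rightarrow> 'a::comm_monoid_add"
  shows "(\<Sum>t\<le>2. f t) = f 0 + f 1 + f 2"
  "(\<Sum>t\<le>3. f t) = f 0 + f 1 + f 2 + f 3"
  "(\<Sum>t\<le>4. f t) = f 0 + f 1 + f 2 + f 3 + f 4"
  by (simp_all add: eval_nat_numeral)

lemma choose_small: "3 choose 2 = 3" "4 choose 2 = 6" "4 choose 3 = 4"
  by (simp_all add: eval_nat_numeral)

locale change_of_variable =
  fixes Dr :: "'a::ring_1 \<Rightarrow> 'a" and lam :: "'a \<Rightarrow> 'a" and lp :: 'a and n :: nat and a :: "nat \<Rightarrow> 'a"
  assumes units: "\<And>m. 0 < m \<Longrightarrow> is_unit_ring (of_nat m :: 'a)"
    and der: "is_derivation Dr"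
    and aut: "is_ring_automorphism lam"
    and unit_lp: "is_unit_ring lp"
    and central_lp: "central lp"
    and chain: "\<And>x. Dr (lam x) = lp * lam (Dr x)"
    and a0: "a 0 = 1"
    and n2: "2 \<le> n"
begin

(* ell, sig and dlog are lambda', 1/lambda' and lambda''/lambda' as elements of the centre. *)

definition d :: "'a center \<Rightarrow> 'a center" where "d = center_der Dr"

definition ell :: "'a center" where "ell = to_center lp"

definition sig :: "'a center" where "sig = rinv ell"

definition dlog :: "'a center" where "dlog = d ell * sig"

definition N :: "'a center" where "N = of_nat n"

definition g :: "'a center" where "g = (N - 1) * rinv 2 * sig * dlog"

lemma of_center_d [simp]: "of_center (d x) = Dr (of_center x)"
  by (simp add: d_def der)

lemma d_der: "is_derivation d"
  unfolding d_def by (rule is_derivation_center_der [OF der])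

lemma of_center_ell [simp]: "of_center ell = lp"
  by (simp add: ell_def central_lp)

lemma center_units: "0 < m \<Longrightarrow> is_unit_ring (of_nat m :: 'a center)"
  by (rule is_unit_ring_of_nat_center [OF units])

lemma center_unit_numeral: "is_unit_ring (numeral w :: 'a center)"
  using center_units [of "numeral w"] by simp

lemma unit_ell: "is_unit_ring ell"
  unfolding ell_def by (rule is_unit_ring_to_center [OF central_lp unit_lp])

lemma ell_sig: "ell * sig = 1"
  by (simp add: sig_def rinv_unit unit_ell)

lemma of_center_sig [simp]: "of_center sig = rinv lp"
  by (simp add: sig_def of_center_rinv unit_ell)

lemma d_sig: "d sig = - (sig * dlog)"
proof -
  have "d ell * sig + ell * d sig = 0"
    using derivation_mult [OF d_der, of ell sig] by (simp add: ell_sig d_der derivation_1)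
  then have "sig * (d ell * sig) + (sig * ell) * d sig = 0"
    by (metis distrib_left mult.assoc mult_zero_right)
  then show ?thesis
    using ell_sig by (simp add: dlog_def mult.commute add_eq_0_iff)
qed

lemma d_N: "d N = 0"
  by (simp add: N_def d_der derivation_of_nat)

lemma two_g: "2 * g = (N - 1) * sig * dlog"
proof -
  have "2 * g = (N - 1) * (2 * rinv 2) * sig * dlog"
    unfolding g_def by (simp only: mult_ac)
  then show ?thesis
    using rinv_unit (1) [OF center_units [of 2]] by simp
qed

lemma d_ell: "d ell = dlog * ell"
  using ell_sig by (simp add: dlog_def mult.assoc mult.commute [of sig])

lemma d_d_ell: "d (d ell) = (d dlog + dlog ^ 2) * ell"
  by (simp add: d_ell d_der derivation_mult power2_eq_square algebra_simps)

lemma center_rinv_numeral: "numeral w * rinv (numeral w :: 'a center) = 1"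
  by (rule rinv_unit (1) [OF center_unit_numeral])

lemma center_numeral_cancel:
  assumes "numeral w * x = z" and "numeral w * x' = z"
  shows "x = (x' :: 'a center)"
proof -
  from assms have "numeral w * x = numeral w * x'"
    by simp
  then show ?thesis
    by (rule unit_cancel_left [OF center_unit_numeral])
qed

lemma two_schwarzian: "2 * schwarzian d ell = 2 * d dlog - dlog ^ 2"
proof -
  have "schwarzian d ell = d dlog + dlog ^ 2 - 3 * rinv 2 * dlog ^ 2"
    using ell_sig by (simp add: schwarzian_def sig_def [symmetric] dlog_def [symmetric] d_d_ell mult.assoc)
  then have "2 * schwarzian d ell = 2 * d dlog + 2 * dlog ^ 2 - 3 * (2 * rinv 2) * dlog ^ 2"
    by (simp only: right_diff_distrib distrib_left mult_ac)
  then show ?thesis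
    by (simp add: center_rinv_numeral algebra_simps)
qed

lemma of_center_schwarzian: "of_center (schwarzian d ell) = schwarzian Dr lp"
  by (simp add: schwarzian_def of_center_rinv unit_ell center_unit_numeral)

lemma lam_add: "lam (x + y) = lam x + lam y"
  and lam_mult: "lam (x * y) = lam x * lam y"
  and lam_1: "lam 1 = 1"
  using aut by (simp_all add: is_ring_automorphism_def)

lemma lam_0: "lam 0 = 0"
  by (rule additive_0 [OF lam_add])

lemma lam_of_nat: "lam (of_nat k) = of_nat k"
  by (induction k) (simp_all add: lam_0 lam_1 lam_add)

lemma chain_rinv: "rinv lp * Dr (lam x) = lam (Dr x)"
  using rinv_unit (2) [OF unit_lp] by (simp add: chain mult.assoc [symmetric])

definition L_coeff :: "nat \<Rightarrow> 'a" where
  "L_coeff = (SOME c. op_L n a = op_expand Dr (a 1) n c)"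

lemma L_expand: "op_L n a = op_expand Dr (a 1) n L_coeff"
proof -
  have "\<exists>c. op_L n a = op_expand Dr (a 1) n c"
    by (rule op_expand_exists) (simp_all add: der derivation_0 op_L_def)
  then show ?thesis
    unfolding L_coeff_def by (rule someI_ex)
qed

lemma n_Suc_Suc: obtains l where "n = Suc (Suc l)"
  using n2 by (metis add_2_eq_Suc le_Suc_ex)

lemma L_coeff_top: "L_coeff n = 1"
proof -
  obtain l where l: "n = Suc (Suc l)"
    by (rule n_Suc_Suc)
  have "op_L n a n = op_expand Dr (a 1) n L_coeff n"
    by (simp add: L_expand)
  then show ?thesis
    by (simp add: l op_L_def a0 op_expand_def op_pow1_above op_pow1_diag der derivation_0)
qed

lemma L_coeff_sub: "L_coeff (n - 1) = 0"
proof -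
  obtain l where l: "n = Suc (Suc l)"
    by (rule n_Suc_Suc)
  have "op_L n a (n - 1) = op_expand Dr (a 1) n L_coeff (n - 1)"
    by (simp add: L_expand)
  then show ?thesis
    using L_coeff_top
    by (simp add: l op_L_def op_expand_def op_pow1_above op_pow1_diag op_pow1_monic_subdiag der derivation_0)
qed

lemma L_coeff_covariant:
  assumes "t \<in> {2..n}"
  shows "L_coeff (n - t) = of_nat (n choose t) * wilczynski Dr n (op_L n a) t"
proof -
  have "wilczynski Dr n (op_L n a) t = rinv (of_nat (n choose t)) * L_coeff (n - t)"
    unfolding L_expand by (rule wilczynski_op_expand [OF units der n2 L_coeff_top L_coeff_sub assms])
  moreover have "is_unit_ring (of_nat (n choose t) :: 'a)"
    using assms by (simp add: units)
  ultimately show ?thesis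
    by (simp add: rinv_unit mult.assoc [symmetric])
qed

lemma Lhat_subst: "op_Lhat Dr lam lp n a m = lp ^ n * op_subst Dr lam (rinv lp) n (op_L n a) m"
proof -
  have "op_subst Dr lam (rinv lp) n (op_L n a) m
      = (\<Sum>i\<le>n. of_nat (n choose (n - i)) * lam (a (n - i)) * op_pow1 Dr (rinv lp) 0 i m)"
    by (simp add: op_subst_def op_L_def lam_mult lam_of_nat)
  also have "\<dots> = (\<Sum>i\<le>n. of_nat (n choose i) * lam (a i) * op_pow1 Dr (rinv lp) 0 (n - i) m)"
    by (rule sum.reindex_bij_witness [of _ "\<lambda>i. n - i" "\<lambda>i. n - i"]) auto
  finally show ?thesis
    by (simp add: op_Lhat_def atLeast0AtMost sum_distrib_left mult.assoc)
qed

(* The gauge b_1 of hat L^lambda; the correction (n - 1)/2 lambda''/lambda' makes its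
   (D + hat_b)^(n-1) coefficient vanish (hat_L_coeff_sub). *)

definition hat_b :: 'a where "hat_b = lp * lam (a 1) - of_center ((N - 1) * rinv 2 * dlog)"

definition R :: "nat \<Rightarrow> nat \<Rightarrow> 'a center" where "R = op_pow1 d sig g"

definition hat_L_coeff :: "nat \<Rightarrow> 'a" where
  "hat_L_coeff i = (\<Sum>j\<le>n. lp ^ n * lam (L_coeff j) * of_center (R j i))"

lemma gauge_decomposition: "rinv lp * hat_b + of_center g = lam (a 1)"
proof -
  have "sig * ((N - 1) * rinv 2 * dlog) = g"
    by (simp add: g_def mult_ac)
  then have "rinv lp * of_center ((N - 1) * rinv 2 * dlog) = of_center g"
    by (metis of_center_sig of_center_ring_simps(6))
  then show ?thesis
    using rinv_unit (2) [OF unit_lp] by (simp add: hat_b_def right_diff_distrib mult.assoc [symmetric])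
qed

lemma R_twisted:
  "op_pow1 (\<lambda>x. Dr x + hat_b * x - x * hat_b) (rinv lp) (of_center g) j = (\<lambda>m. of_center (R j m))"
proof
  fix m
  have "Dr (of_center x) + hat_b * of_center x - of_center x * hat_b = of_center (d x)" for x
    using central_mult_left [OF central_of_center, of x hat_b] by simp
  then show "op_pow1 (\<lambda>x. Dr x + hat_b * x - x * hat_b) (rinv lp) (of_center g) j m = of_center (R j m)"
    unfolding R_def of_center_sig [symmetric] by (rule op_pow1_of_center)
qed

lemma Lhat_expand: "op_Lhat Dr lam lp n a = op_expand Dr hat_b n hat_L_coeff"
proof
  fix m
  have central_rinv_lp: "central (rinv lp)"
    by (rule central_rinv [OF central_lp unit_lp])
  have "op_Lhat Dr lam lp n a m
      = lp ^ n * (\<Sum>j\<le>n. lam (L_coeff j) * op_pow1 Dr (rinv lp) (lam (a 1)) j m)"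
    unfolding Lhat_subst L_expand
    by (simp add: op_subst_op_expand der lam_add lam_mult lam_1 central_rinv_lp chain_rinv)
  also have "\<dots> = (\<Sum>j\<le>n. (lp ^ n * lam (L_coeff j))
      * op_expand Dr hat_b n (\<lambda>i. of_center (R j i)) m)"
    unfolding gauge_decomposition [symmetric]
    by (simp add: op_expand_op_pow1 [OF der, symmetric] R_twisted sum_distrib_left mult.assoc)
  also have "\<dots> = op_expand Dr hat_b n hat_L_coeff m"
    unfolding hat_L_coeff_def by (simp add: op_expand_sum)
  finally show "op_Lhat Dr lam lp n a m = op_expand Dr hat_b n hat_L_coeff m" .
qed

lemma R_above: "j < m \<Longrightarrow> R j m = 0"
  unfolding R_def by (rule op_pow1_above) (simp add: d_der derivation_0)

lemma R_diag: "R j j = sig ^ j"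
  unfolding R_def by (rule op_pow1_diag) (simp add: d_der derivation_0)

lemma ell_pow_sig_pow:
  assumes "t \<le> n"
  shows "ell ^ n * sig ^ (n - t) = ell ^ t"
proof -
  have "ell ^ n = ell ^ t * ell ^ (n - t)"
    using assms by (simp add: power_add [symmetric])
  then show ?thesis
    by (simp add: mult.assoc power_mult_distrib [symmetric] ell_sig)
qed

lemmas R_subdiag =
  op_pow1_subdiag1 [OF d_der d_sig d_N two_g, folded R_def]
  op_pow1_subdiag2 [OF d_der d_sig d_N two_g _ _ two_schwarzian, folded R_def]
  op_pow1_subdiag3 [OF d_der d_sig d_N two_g _ _ two_schwarzian, folded R_def]
  op_pow1_subdiag4 [OF d_der d_sig d_N two_g _ _ two_schwarzian, folded R_def]

lemma hat_L_coeff_top: "hat_L_coeff n = 1"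
proof -
  have "hat_L_coeff n = lp ^ n * lam (L_coeff n) * of_center (R n n)"
    unfolding hat_L_coeff_def by (subst sum_atMost_top [of 0]) (simp_all add: R_above)
  also have "\<dots> = of_center ((ell * sig) ^ n)"
    by (simp add: L_coeff_top lam_1 R_diag power_mult_distrib)
  finally show ?thesis
    by (simp add: ell_sig)
qed

lemma hat_L_coeff_sub: "hat_L_coeff (n - 1) = 0"
proof -
  have "2 * R n (n - 1) = 2 * 0"
    using R_subdiag(1) [where i = "n - 1" and J = N] n2 by (simp add: N_def ffact_Suc)
  then have "R n (n - 1) = 0"
    by (rule unit_cancel_left [OF center_unit_numeral])
  moreover have "hat_L_coeff (n - 1) = lp ^ n * lam (L_coeff n) * of_center (R n (n - 1))
      + lp ^ n * lam (L_coeff (n - 1)) * of_center (R (n - 1) (n - 1))"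
    unfolding hat_L_coeff_def using n2 by (subst sum_atMost_top [of 1]) (simp_all add: R_above)
  ultimately show ?thesis
    using L_coeff_sub by (simp add: lam_0)
qed

definition I_ext :: "nat \<Rightarrow> 'a" where
  "I_ext t = (if t = 0 then 1 else if t = 1 then 0 else wilczynski Dr n (op_L n a) t)"

definition kappa :: "nat \<Rightarrow> nat \<Rightarrow> 'a center" where
  "kappa k t = rinv (of_nat (n choose k)) * (of_nat (n choose t) * ell ^ n * R (n - t) (n - k))"

lemma L_coeff_I_ext: "t \<le> n \<Longrightarrow> L_coeff (n - t) = of_nat (n choose t) * I_ext t"
  using L_coeff_top L_coeff_sub L_coeff_covariant [of t] by (auto simp: I_ext_def)

lemma covariant_expansion:
  assumes k: "k \<in> {2..n}"
  shows "wilczynski Dr n (op_Lhat Dr lam lp n a) k = (\<Sum>t\<le>k. of_center (kappa k t) * lam (I_ext t))"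
proof -
  have unit_choose: "is_unit_ring (of_nat (n choose k) :: 'a center)"
    using k by (simp add: center_units)
  have summand: "lp ^ n * lam (L_coeff (n - t)) * of_center (R (n - t) (n - k))
      = of_center (of_nat (n choose t) * ell ^ n * R (n - t) (n - k)) * lam (I_ext t)" if "t \<le> k" for t
  proof -
    have "lp ^ n * lam (L_coeff (n - t)) * of_center (R (n - t) (n - k))
        = lp ^ n * (of_nat (n choose t) * lam (I_ext t)) * of_center (R (n - t) (n - k))"
      using that k by (simp add: L_coeff_I_ext lam_mult lam_of_nat)
    also have "\<dots> = (lp ^ n * of_nat (n choose t)) * (lam (I_ext t) * of_center (R (n - t) (n - k)))"
      by (simp only: mult.assoc)
    also have "\<dots> = (of_nat (n choose t) * lp ^ n) * (of_center (R (n - t) (n - k)) * lam (I_ext t))"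
      by (simp only: mult_of_nat_commute central_mult_left [OF central_of_center, symmetric])
    finally show ?thesis
      by (simp add: mult.assoc)
  qed
  have "wilczynski Dr n (op_Lhat Dr lam lp n a) k = rinv (of_nat (n choose k)) * hat_L_coeff (n - k)"
    unfolding Lhat_expand by (rule wilczynski_op_expand [OF units der n2 hat_L_coeff_top hat_L_coeff_sub k])
  also have "hat_L_coeff (n - k)
      = (\<Sum>t\<le>k. lp ^ n * lam (L_coeff (n - t)) * of_center (R (n - t) (n - k)))"
    unfolding hat_L_coeff_def using k by (subst sum_atMost_top [of k]) (auto simp: R_above)
  also have "rinv (of_nat (n choose k)) * \<dots> = (\<Sum>t\<le>k. rinv (of_nat (n choose k))
      * (of_center (of_nat (n choose t) * ell ^ n * R (n - t) (n - k)) * lam (I_ext t)))"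
    unfolding sum_distrib_left by (rule sum.cong) (simp_all add: summand)
  also have "\<dots> = (\<Sum>t\<le>k. of_center (kappa k t) * lam (I_ext t))"
    by (simp add: kappa_def of_center_rinv [OF unit_choose] mult.assoc)
  finally show ?thesis .
qed

lemma kappa_eq:
  assumes "t \<le> k" and "k \<le> n"
    and closed: "K * R (n - t) (n - k) = sig ^ (n - t) * (ffact (k - t) (of_nat (n - t)) * P)"
  shows "K * kappa k t = of_nat (fact (k - t) * (k choose t)) * ell ^ t * P"
proof -
  let ?C = "of_nat (n choose k) :: 'a center"
  have unit_C: "is_unit_ring ?C"
    using assms by (simp add: center_units)
  have choose: "(n choose t) * (fact (k - t) * ((n - t) choose (k - t)))
      = (n choose k) * (fact (k - t) * (k choose t))"
    using choose_mult [OF assms(1,2)] by (metis mult.left_commute)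
  have "?C * (K * kappa k t) = (?C * rinv ?C) * (of_nat (n choose t) * ell ^ n * (K * R (n - t) (n - k)))"
    by (simp add: kappa_def mult_ac)
  also have "\<dots> = of_nat (n choose t) * (ell ^ n * sig ^ (n - t)) * ffact (k - t) (of_nat (n - t)) * P"
    using rinv_unit (1) [OF unit_C] by (simp add: closed mult_ac)
  also have "\<dots> = of_nat ((n choose t) * (fact (k - t) * ((n - t) choose (k - t)))) * ell ^ t * P"
    using assms(1,2) by (simp only: ffact_of_nat ell_pow_sig_pow [of t]) (simp add: mult_ac)
  also have "\<dots> = ?C * (of_nat (fact (k - t) * (k choose t)) * ell ^ t * P)"
    by (simp only: choose) (simp add: mult_ac)
  finally show ?thesis
    by (rule unit_cancel_left [OF unit_C])
qed

lemma kappa_diag: "k \<le> n \<Longrightarrow> kappa k k = ell ^ k"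
  using kappa_eq [of k k 1 1] by (simp add: R_diag)

lemma kappa_2_0: "kappa 2 0 = of_nat (n + 1) * rinv (of_nat 6) * schwarzian d ell"
proof -
  have "24 * R (n - 0) (n - 2)
      = sig ^ (n - 0) * (ffact (2 - 0) (of_nat (n - 0)) * ((N + 1) * (2 * schwarzian d ell)))"
    using R_subdiag(2) [where i = "n - 2" and J = N and M = 0]
    by (simp only: le_add_diff_inverse2 [OF n2]) (simp add: N_def)
  from kappa_eq [OF _ n2 this] have "24 * kappa 2 0 = 4 * (N + 1) * schwarzian d ell"
    by (simp add: algebra_simps)
  moreover have "24 * (of_nat (n + 1) * rinv (of_nat 6) * schwarzian d ell) = 4 * (N + 1) * schwarzian d ell"
  proof -
    have "24 * (of_nat (n + 1) * rinv (of_nat 6) * schwarzian d ell)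
        = 4 * (N + 1) * schwarzian d ell * (6 * rinv 6)"
      by (simp add: N_def algebra_simps)
    then show ?thesis
      by (simp add: center_rinv_numeral)
  qed
  ultimately show ?thesis
    by (rule center_numeral_cancel)
qed

lemma kappa_3_0:
  assumes n3: "3 \<le> n"
  shows "kappa 3 0 = of_nat (n + 1) * rinv (of_nat 4) * d (schwarzian d ell)"
proof -
  have "48 * R (n - 0) (n - 3)
      = sig ^ (n - 0) * (ffact (3 - 0) (of_nat (n - 0)) * ((N + 1) * d (2 * schwarzian d ell)))"
    using R_subdiag(3) [where i = "n - 3" and J = N and M = 0]
    by (simp only: le_add_diff_inverse2 [OF n3]) (simp add: N_def)
  from kappa_eq [OF _ n3 this] have "48 * kappa 3 0 = 12 * (N + 1) * d (schwarzian d ell)"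
    by (simp add: fact_numeral d_der derivation_mult derivation_numeral algebra_simps)
  moreover have "48 * (of_nat (n + 1) * rinv (of_nat 4) * d (schwarzian d ell))
      = 12 * (N + 1) * d (schwarzian d ell)"
  proof -
    have "48 * (of_nat (n + 1) * rinv (of_nat 4) * d (schwarzian d ell))
        = 12 * (N + 1) * d (schwarzian d ell) * (4 * rinv 4)"
      by (simp add: N_def algebra_simps)
    then show ?thesis
      by (simp add: center_rinv_numeral)
  qed
  ultimately show ?thesis
    by (rule center_numeral_cancel)
qed

lemma kappa_3_2:
  assumes n3: "3 \<le> n"
  shows "kappa 3 2 = of_nat 3 * ell * d ell"
proof -
  have "n - 3 + 1 = n - 2" and "N - of_nat (n - 2) = 2"
    using n3 by (simp_all add: N_def of_nat_diff)
  then have "2 * R (n - 2) (n - 3) = sig ^ (n - 2) * (ffact (3 - 2) (of_nat (n - 2)) * (2 * dlog))"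
    using R_subdiag(1) [where i = "n - 3" and J = "of_nat (n - 2)"] by simp
  from kappa_eq [OF _ n3 this] have "2 * kappa 3 2 = 6 * ell ^ 2 * dlog"
    by (simp add: choose_small)
  moreover have "2 * (of_nat 3 * ell * d ell) = 6 * ell ^ 2 * dlog"
    by (simp add: d_ell power2_eq_square algebra_simps)
  ultimately show ?thesis
    by (rule center_numeral_cancel)
qed

lemma kappa_4_0:
  assumes n4: "4 \<le> n"
  shows "kappa 4 0 = of_nat 3 * of_nat (n + 1) * rinv (of_nat 10) * d (d (schwarzian d ell))
    + of_nat (n + 1) * of_nat (5 * n + 7) * rinv (of_nat 60) * schwarzian d ell ^ 2"
proof -
  have "5760 * R (n - 0) (n - 4) = sig ^ (n - 0) * (ffact (4 - 0) (of_nat (n - 0))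
      * (36 * (N + 1) * d (d (2 * schwarzian d ell)) + (N + 1) * (5 * N + 7) * (2 * schwarzian d ell) ^ 2))"
    using R_subdiag(4) [where i = "n - 4" and J = N and M = 0]
    by (simp only: le_add_diff_inverse2 [OF n4]) (simp add: N_def algebra_simps)
  from kappa_eq [OF _ n4 this] have "5760 * kappa 4 0
      = (N + 1) * (1728 * d (d (schwarzian d ell)) + 96 * (5 * N + 7) * schwarzian d ell ^ 2)"
    by (simp add: fact_numeral d_der derivation_mult derivation_numeral power2_eq_square algebra_simps)
  moreover have "5760 * (of_nat 3 * of_nat (n + 1) * rinv (of_nat 10) * d (d (schwarzian d ell))
      + of_nat (n + 1) * of_nat (5 * n + 7) * rinv (of_nat 60) * schwarzian d ell ^ 2)
      = (N + 1) * (1728 * d (d (schwarzian d ell)) + 96 * (5 * N + 7) * schwarzian d ell ^ 2)"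
  proof -
    have "5760 * (of_nat 3 * of_nat (n + 1) * rinv (of_nat 10) * d (d (schwarzian d ell))
        + of_nat (n + 1) * of_nat (5 * n + 7) * rinv (of_nat 60) * schwarzian d ell ^ 2)
        = (N + 1) * (1728 * d (d (schwarzian d ell)) * (10 * rinv 10)
          + 96 * (5 * N + 7) * schwarzian d ell ^ 2 * (60 * rinv 60))"
      by (simp add: N_def algebra_simps)
    then show ?thesis
      by (simp add: center_rinv_numeral)
  qed
  ultimately show ?thesis
    by (rule center_numeral_cancel)
qed

lemma kappa_4_2:
  assumes n4: "4 \<le> n"
  shows "kappa 4 2 = of_nat (n + 5) * ell * d (d ell) - of_nat 3 * rinv (of_nat 2) * of_nat (n - 1) * d ell ^ 2"
proof -
  have i: "n - 4 + 2 = n - 2" and M: "2 = N - of_nat (n - 2)" and J: "of_nat (n - 2) = N - 2"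
    using n4 by (simp_all add: N_def of_nat_diff)
  have "24 * R (n - 2) (n - 4) = sig ^ (n - 2) * (ffact (4 - 2) (of_nat (n - 2))
      * ((N + 5) * (2 * d dlog - dlog ^ 2) + 18 * dlog ^ 2))"
    using R_subdiag(2) [where i = "n - 4", OF _ M] unfolding i J
    by (simp add: two_schwarzian algebra_simps)
  from kappa_eq [OF _ n4 this]
  have "24 * kappa 4 2 = 12 * ell ^ 2 * ((N + 5) * (2 * d dlog - dlog ^ 2) + 18 * dlog ^ 2)"
    by (simp add: choose_small)
  moreover have
    "24 * (of_nat (n + 5) * ell * d (d ell) - of_nat 3 * rinv (of_nat 2) * of_nat (n - 1) * d ell ^ 2)
      = 12 * ell ^ 2 * ((N + 5) * (2 * d dlog - dlog ^ 2) + 18 * dlog ^ 2)"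
  proof -
    have "24 * (of_nat (n + 5) * ell * d (d ell) - of_nat 3 * rinv (of_nat 2) * of_nat (n - 1) * d ell ^ 2)
        = 24 * (N + 5) * ell ^ 2 * (d dlog + dlog ^ 2) - 36 * (N - 1) * ell ^ 2 * dlog ^ 2 * (2 * rinv 2)"
      using n4 by (simp add: N_def of_nat_diff d_ell d_der derivation_mult power2_eq_square algebra_simps)
    then show ?thesis
      by (simp add: center_rinv_numeral algebra_simps)
  qed
  ultimately show ?thesis
    by (rule center_numeral_cancel)
qed

lemma kappa_4_3:
  assumes n4: "4 \<le> n"
  shows "kappa 4 3 = of_nat 6 * ell ^ 2 * d ell"
proof -
  have "n - 4 + 1 = n - 3" and "N - of_nat (n - 3) = 3"
    using n4 by (simp_all add: N_def of_nat_diff)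
  then have "2 * R (n - 3) (n - 4) = sig ^ (n - 3) * (ffact (4 - 3) (of_nat (n - 3)) * (3 * dlog))"
    using R_subdiag(1) [where i = "n - 4" and J = "of_nat (n - 3)"] by simp
  from kappa_eq [OF _ n4 this] have "2 * kappa 4 3 = 12 * ell ^ 3 * dlog"
    by (simp add: choose_small)
  moreover have "2 * (of_nat 6 * ell ^ 2 * d ell) = 12 * ell ^ 3 * dlog"
    by (simp add: d_ell power2_eq_square power3_eq_cube algebra_simps)
  ultimately show ?thesis
    by (rule center_numeral_cancel)
qed

lemma covariant_2:
  "wilczynski Dr n (op_Lhat Dr lam lp n a) 2 = lp ^ 2 * lam (wilczynski Dr n (op_L n a) 2)
    + of_nat (n + 1) * rinv (of_nat 6) * schwarzian Dr lp"
proof -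
  have "2 \<in> {2..n}"
    using n2 by simp
  from covariant_expansion [OF this] n2 show ?thesis
    by (simp add: sum_atMost_2_3_4 I_ext_def lam_0 lam_1 kappa_2_0 kappa_diag of_center_rinv
        center_unit_numeral of_center_schwarzian add.commute)
qed

lemma covariant_3:
  assumes "3 \<le> n"
  shows "wilczynski Dr n (op_Lhat Dr lam lp n a) 3 = lp ^ 3 * lam (wilczynski Dr n (op_L n a) 3)
    + of_nat 3 * lp * Dr lp * lam (wilczynski Dr n (op_L n a) 2)
    + of_nat (n + 1) * rinv (of_nat 4) * Dr (schwarzian Dr lp)"
proof -
  have "3 \<in> {2..n}"
    using assms by simp
  from covariant_expansion [OF this] assms show ?thesis
    by (simp add: sum_atMost_2_3_4 I_ext_def lam_0 lam_1 kappa_3_0 kappa_3_2 kappa_diag of_center_rinv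
        center_unit_numeral of_center_schwarzian add_ac)
qed

lemma covariant_4:
  assumes "4 \<le> n"
  shows "wilczynski Dr n (op_Lhat Dr lam lp n a) 4 = lp ^ 4 * lam (wilczynski Dr n (op_L n a) 4)
    + of_nat 6 * lp ^ 2 * Dr lp * lam (wilczynski Dr n (op_L n a) 3)
    + (of_nat (n + 5) * lp * Dr (Dr lp) - of_nat 3 * rinv (of_nat 2) * of_nat (n - 1) * Dr lp ^ 2)
      * lam (wilczynski Dr n (op_L n a) 2)
    + of_nat 3 * of_nat (n + 1) * rinv (of_nat 10) * Dr (Dr (schwarzian Dr lp))
    + of_nat (n + 1) * of_nat (5 * n + 7) * rinv (of_nat 60) * schwarzian Dr lp ^ 2"
proof -
  have "4 \<in> {2..n}"
    using assms by simp
  from covariant_expansion [OF this] assms show ?thesis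
    by (simp add: sum_atMost_2_3_4 I_ext_def lam_0 lam_1 kappa_4_0 kappa_4_2 kappa_4_3 kappa_diag of_center_rinv
        center_unit_numeral of_center_schwarzian add_ac)
qed

end

theorem mainTheorem10:
  fixes Dr :: "'a::ring_1 \<Rightarrow> 'a" and lam :: "'a \<Rightarrow> 'a" and lp :: 'a
    and n :: nat and a :: "nat \<Rightarrow> 'a"
  assumes QAlg: "\<And>m::nat. m > 0 \<Longrightarrow> is_unit_ring (of_nat m :: 'a)"
    and Der: "is_derivation Dr"
    and Aut: "is_ring_automorphism lam"
    and unit_lp: "is_unit_ring lp"
    and central_lp: "\<And>j. central ((Dr ^^ j) lp)"
    and chain: "\<And>x. Dr (lam x) = lp * lam (Dr x)"
    and a0: "a 0 = 1"
    and n2: "n \<ge> 2"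
  shows
   "(let l2 = Dr lp; l3 = Dr (Dr lp); S = schwarzian Dr lp;
         I = wilczynski Dr n (op_L n a);
         Il = wilczynski Dr n (op_Lhat Dr lam lp n a)
     in Il 2 = lp ^ 2 * lam (I 2) + of_nat (n + 1) * rinv (of_nat 6) * S
      \<and> (n \<ge> 3 \<longrightarrow>
          Il 3 = lp ^ 3 * lam (I 3) + of_nat 3 * lp * l2 * lam (I 2)
                 + of_nat (n + 1) * rinv (of_nat 4) * Dr S)
      \<and> (n \<ge> 4 \<longrightarrow>
          Il 4 = lp ^ 4 * lam (I 4) + of_nat 6 * lp ^ 2 * l2 * lam (I 3)
                 + (of_nat (n + 5) * lp * l3
                    - of_nat 3 * rinv (of_nat 2) * of_nat (n - 1) * l2 ^ 2) * lam (I 2)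
                 + of_nat 3 * of_nat (n + 1) * rinv (of_nat 10) * Dr (Dr S)
                 + of_nat (n + 1) * of_nat (5 * n + 7) * rinv (of_nat 60) * S ^ 2))"
proof -
  interpret change_of_variable Dr lam lp n a
    using QAlg Der Aut unit_lp central_lp [of 0] chain a0 n2 by unfold_locales simp_all
  show ?thesis
    unfolding Let_def using covariant_2 covariant_3 covariant_4 by blast
qed

end
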